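(* Let $\mathbf M=(M,\vee,(\sqsubseteq^n)_{n\ge 1})$ be a multi-argument specialization semilattice. Then there exist a set $X$ and a closure operation $K$ on $\mathcal P(X)$ such that $\mathbf M$ embeds into the multi-argument specialization semilattice $(\mathcal P(X),\cup,(\sqsubseteq^n)_{n\ge1})$ associated to the closure space $(X,K)$, where $a\sqsubseteq^n b_1,\dots,b_n$ holds iff $a\subseteq Kb_1\cup\dots\cup Kb_n$. That is, there is an injective map $\varphi:M\to\mathcal P(X)$ with $\varphi(a\vee b)=\varphi(a)\cup\varphi(b)$ for all $a,b\in M$, and for all $n\ge1$ and $a,b_1,\dots,b_n\in M$: $a\sqsubseteq^n b_1,\dots,b_n$ in $\mathbf M$ if and only if $\varphi(a)\subseteq K\varphi(b_1)\cup\dots\cup K\varphi(b_n)$.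
   Context: A multi-argument specialization semilattice is a join semilattice $(M,\vee)$ (with order $a\le b$ iff $a\vee b=b$) together with, for each $n\ge1$, an $(n+1)$-ary relation written $a\sqsubseteq^n b_1,\dots,b_n$ (or $a\sqsubseteq b_1,\dots,b_n$), such that for all elements: (M1) $a\sqsubseteq a$; (M2) if $a\sqsubseteq b_1,b_2,\dots,b_n$ and $b_1\sqsubseteq c$ then $a\sqsubseteq c,b_2,\dots,b_n$; (M3) if $a\le b$ and $b\sqsubseteq c_1,\dots,c_m$ then $a\sqsubseteq c_1,\dots,c_m$; (M4) if $a\sqsubseteq b_1,\dots,b_n$ then $a\sqsubseteq b_{\sigma1},\dots,b_{\sigma n}$ for every permutation $\sigma$ of $\{1,\dots,n\}$; (M5) if $a\sqsubseteq b_1,\dots,b_n,b_n$ then $a\sqsubseteq b_1,\dots,b_n$; (M6) if $a\sqsubseteq b_1,\dots,b_n$ then $a\sqsubseteq b_1,\dots,b_n,b_{n+1}$; (M7) if $a\sqsubseteq b_1,\dots,b_n$ and $a_1\sqsubseteq b_1,\dots,b_n$ then $a\vee a_1\sqsubseteq b_1,\dots,b_n$. A closure operation $K$ on $\mathcal P(X)$ is extensive ($x\subseteq Kx$), idempotent ($KKx=Kx$) and isotone ($x\subseteq y\Rightarrow Kx\subseteq Ky$). *)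

theory Defs
  imports "HOL-Combinatorics.Permutations"
begin

text \<open>S a [b1,...,bn] encodes a \<sqsubseteq>^n b1,...,bn; only nonempty lists (n >= 1) matter.\<close>

definition mss :: "('a::semilattice_sup \<Rightarrow> 'a list \<Rightarrow> bool) \<Rightarrow> bool" where
  "mss S \<longleftrightarrow>
     (\<forall>a. S a [a]) \<and>
     (\<forall>a b bs c. S a (b # bs) \<and> S b [c] \<longrightarrow> S a (c # bs)) \<and>
     (\<forall>a b cs. a \<le> b \<and> cs \<noteq> [] \<and> S b cs \<longrightarrow> S a cs) \<and>
     (\<forall>a bs \<sigma>. bs \<noteq> [] \<and> \<sigma> permutes {..<length bs} \<and> S a bs \<longrightarrow>
        S a (map (\<lambda>i. bs ! \<sigma> i) [0..<length bs])) \<and>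
     (\<forall>a bs b. S a (bs @ [b, b]) \<longrightarrow> S a (bs @ [b])) \<and>
     (\<forall>a bs c. bs \<noteq> [] \<and> S a bs \<longrightarrow> S a (bs @ [c])) \<and>
     (\<forall>a a1 bs. bs \<noteq> [] \<and> S a bs \<and> S a1 bs \<longrightarrow> S (sup a a1) bs)"

definition closure_op_on :: "'b set \<Rightarrow> ('b set \<Rightarrow> 'b set) \<Rightarrow> bool" where
  "closure_op_on X K \<longleftrightarrow>
     (\<forall>x. x \<subseteq> X \<longrightarrow> K x \<subseteq> X \<and> x \<subseteq> K x \<and> K (K x) = K x) \<and>
     (\<forall>x y. x \<subseteq> y \<and> y \<subseteq> X \<longrightarrow> K x \<subseteq> K y)"

end

theory Submission
  imports Defs
begin

text \<open>Take as points the pairs (J, N) where J is an ideal of M and N \<subseteq> J is closed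
  downwards under unary specialization, and a \<sqsubseteq> bs with all entries of bs in N forces
  a \<in> J. Send a to the set of points with a \<notin> J, and generate the closure from the
  sets U b of points with b \<notin> N. The points (\<down>b, \<emptyset>) make the map injective; for a
  nonempty list bs, the point J = {c. c \<sqsubseteq> bs}, N = {c. c \<sqsubseteq> b for some b in bs} shows
  that a \<sqsubseteq> bs is reflected, and in particular that the closure of the image of b is U b.\<close>

definition generated_closure :: "'b set \<Rightarrow> 'b set set \<Rightarrow> 'b set \<Rightarrow> 'b set" where
  "generated_closure X F Y = X \<inter> \<Inter>{C \<in> F. Y \<subseteq> C}"

lemma closure_op_on_generated_closure: "closure_op_on X (generated_closure X F)"
  unfolding closure_op_on_def generated_closure_def by blast

lemma generated_closure_eqI:
  assumes "C \<in> F" "C \<subseteq> X" "Y \<subseteq> C" "\<And>D. D \<in> F \<Longrightarrow> Y \<subseteq> D \<Longrightarrow> C \<subseteq> D"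
  shows "generated_closure X F Y = C"
  using assms unfolding generated_closure_def by blast

context
  fixes S :: "'a::semilattice_sup \<Rightarrow> 'a list \<Rightarrow> bool"
  assumes mss: "mss S"
begin

lemma mss_refl: "S a [a]"
  using mss unfolding mss_def by metis

lemma mss_trans_head: "S a (b # bs) \<Longrightarrow> S b [c] \<Longrightarrow> S a (c # bs)"
  using mss unfolding mss_def by metis

lemma mss_antimono: "a \<le> b \<Longrightarrow> cs \<noteq> [] \<Longrightarrow> S b cs \<Longrightarrow> S a cs"
  using mss unfolding mss_def by metis

lemma mss_contract: "S a (bs @ [b, b]) \<Longrightarrow> S a (bs @ [b])"
  using mss unfolding mss_def by metis

lemma mss_snoc: "bs \<noteq> [] \<Longrightarrow> S a bs \<Longrightarrow> S a (bs @ [c])"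
  using mss unfolding mss_def by metis

lemma mss_sup: "bs \<noteq> [] \<Longrightarrow> S a bs \<Longrightarrow> S a' bs \<Longrightarrow> S (sup a a') bs"
  using mss unfolding mss_def by metis

lemma mss_permute: "bs \<noteq> [] \<Longrightarrow> \<sigma> permutes {..<length bs} \<Longrightarrow> S a bs \<Longrightarrow> S a (permute_list \<sigma> bs)"
  using mss unfolding mss_def permute_list_def by metis

lemma mss_mset_eq:
  assumes "S a xs" and "mset xs = mset ys"
  shows "S a ys"
proof (cases "xs = []")
  case True
  then show ?thesis using assms by simp
next
  case False
  obtain \<sigma> where "\<sigma> permutes {..<length xs}" and "permute_list \<sigma> xs = ys"
    using mset_eq_permutation assms(2)[symmetric] by blast
  with False assms(1) show ?thesis
    using mss_permute by blast
qed

lemma mss_append: "S a xs \<Longrightarrow> xs \<noteq> [] \<Longrightarrow> S a (xs @ ys)"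
proof (induction ys arbitrary: xs)
  case Nil
  then show ?case by simp
next
  case (Cons y ys)
  then have "S a ((xs @ [y]) @ ys)" using mss_snoc by blast
  then show ?case by simp
qed

lemma mss_remove_duplicate:
  assumes "x \<in> set ys" and "S a (x # ys)"
  shows "S a ys"
proof -
  have "S a (remove1 x ys @ [x, x])"
    using mss_mset_eq[OF assms(2)] assms(1) by simp
  then have "S a (remove1 x ys @ [x])" by (rule mss_contract)
  then show ?thesis
    using mss_mset_eq assms(1) by simp
qed

lemma mss_drop_prefix: "set xs \<subseteq> set ys \<Longrightarrow> S a (xs @ ys) \<Longrightarrow> S a ys"
proof (induction xs)
  case (Cons x xs)
  then have "S a (xs @ ys)"
    using mss_remove_duplicate[of x "xs @ ys"] by simp
  with Cons.IH Cons.prems(1) show ?case by simp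
qed simp

lemma mss_set_mono:
  assumes "S a xs" "xs \<noteq> []" "set xs \<subseteq> set ys"
  shows "S a ys"
  using assms mss_append mss_drop_prefix by blast

lemma mss_cut_list:
  assumes "bs \<noteq> []" and covered: "\<forall>c\<in>set cs. \<exists>b\<in>set bs. S c [b]"
  shows "S a (cs @ ys) \<Longrightarrow> cs @ ys \<noteq> [] \<Longrightarrow> S a (bs @ ys)"
  using covered
proof (induction cs arbitrary: ys)
  case Nil
  then show ?case using mss_set_mono by simp
next
  case (Cons c cs)
  then obtain b where b: "b \<in> set bs" "S c [b]" by auto
  have "S a (b # cs @ ys)"
    using mss_trans_head Cons.prems(1) b(2) by simp
  then have "S a (cs @ ys @ [b])"
    by (rule mss_mset_eq) simp
  then have "S a (bs @ ys @ [b])"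
    using Cons.IH Cons.prems(3) by simp
  then show ?case
    using mss_set_mono b(1) assms(1) by fastforce
qed

end

definition mss_point :: "('a::semilattice_sup \<Rightarrow> 'a list \<Rightarrow> bool) \<Rightarrow> 'a set \<Rightarrow> 'a set \<Rightarrow> bool" where
  "mss_point S J N \<longleftrightarrow>
     (\<forall>x y. x \<le> y \<and> y \<in> J \<longrightarrow> x \<in> J) \<and> (\<forall>x\<in>J. \<forall>y\<in>J. sup x y \<in> J) \<and> N \<subseteq> J \<and>
     (\<forall>c\<in>N. \<forall>c'. S c' [c] \<longrightarrow> c' \<in> N) \<and>
     (\<forall>a bs. bs \<noteq> [] \<and> set bs \<subseteq> N \<and> S a bs \<longrightarrow> a \<in> J)"

text \<open>A point P stands for the pair (\<Union>P, \<Inter>P); every pair (J, N) with N \<subseteq> J arises from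
  P = {J, N}.\<close>

definition mss_points :: "('a::semilattice_sup \<Rightarrow> 'a list \<Rightarrow> bool) \<Rightarrow> 'a set set set" where
  "mss_points S = {P. mss_point S (\<Union>P) (\<Inter>P)}"

definition mss_embed :: "('a::semilattice_sup \<Rightarrow> 'a list \<Rightarrow> bool) \<Rightarrow> 'a \<Rightarrow> 'a set set set" where
  "mss_embed S a = {P \<in> mss_points S. a \<notin> \<Union>P}"

definition mss_basic_closed :: "('a::semilattice_sup \<Rightarrow> 'a list \<Rightarrow> bool) \<Rightarrow> 'a \<Rightarrow> 'a set set set" where
  "mss_basic_closed S b = {P \<in> mss_points S. b \<notin> \<Inter>P}"

lemma mss_point_subset: "mss_point S J N \<Longrightarrow> N \<subseteq> J"
  unfolding mss_point_def by blast

lemma pair_in_mss_points: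
  assumes "mss_point S J N"
  shows "{J, N} \<in> mss_points S"
proof -
  have "N \<subseteq> J" using assms by (rule mss_point_subset)
  then have "\<Union>{J, N} = J" and "\<Inter>{J, N} = N" by auto
  with assms show ?thesis
    unfolding mss_points_def by simp
qed

lemma mss_point_not_all_in:
  "mss_point S J N \<Longrightarrow> S a bs \<Longrightarrow> bs \<noteq> [] \<Longrightarrow> a \<notin> J \<Longrightarrow> \<exists>b\<in>set bs. b \<notin> N"
  unfolding mss_point_def by (meson subsetI)

lemma mss_point_principal: "mss_point S {x. x \<le> b} {}"
  unfolding mss_point_def by (auto intro: order_trans)

lemma mss_point_of_list:
  assumes "mss S" and "bs \<noteq> []"
  shows "mss_point S {c. S c bs} {c. \<exists>b\<in>set bs. S c [b]}"
  unfolding mss_point_def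
proof (intro conjI allI impI ballI subsetI; simp only: mem_Collect_eq)
  show "S x bs" if "x \<le> y \<and> S y bs" for x y
    using mss_antimono[OF assms(1)] assms(2) that by blast
  show "S (sup x y) bs" if "S x bs" "S y bs" for x y
    using mss_sup[OF assms] that .
  show "S c bs" if "\<exists>b\<in>set bs. S c [b]" for c
    using mss_set_mono[OF assms(1), of c "[_]" bs] that by auto
  show "\<exists>b\<in>set bs. S c' [b]" if "\<exists>b\<in>set bs. S c [b]" "S c' [c]" for c c'
    using mss_trans_head[OF assms(1), of c' c "[]"] that by auto
  show "S a bs" if "cs \<noteq> [] \<and> set cs \<subseteq> {c. \<exists>b\<in>set bs. S c [b]} \<and> S a cs" for a cs
    using mss_cut_list[OF assms, of cs a "[]"] that by auto
qed

lemma mss_embed_subset_iff: "mss_embed S a \<subseteq> mss_embed S b \<longleftrightarrow> a \<le> b"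
proof
  assume "mss_embed S a \<subseteq> mss_embed S b"
  moreover have "{{x. x \<le> b}, {}} \<in> mss_points S"
    using pair_in_mss_points mss_point_principal by blast
  ultimately show "a \<le> b"
    unfolding mss_embed_def by auto
next
  assume "a \<le> b"
  then show "mss_embed S a \<subseteq> mss_embed S b"
    unfolding mss_embed_def mss_points_def mss_point_def by blast
qed

lemma inj_mss_embed: "inj (mss_embed S)"
  by (rule injI) (metis mss_embed_subset_iff order.antisym order.refl)

lemma mss_point_sup_iff: "mss_point S J N \<Longrightarrow> sup a b \<in> J \<longleftrightarrow> a \<in> J \<and> b \<in> J"
  unfolding mss_point_def by (meson sup_ge1 sup_ge2)

lemma mss_embed_sup: "mss_embed S (sup a b) = mss_embed S a \<union> mss_embed S b"
proof -
  have "sup a b \<notin> \<Union>P \<longleftrightarrow> a \<notin> \<Union>P \<or> b \<notin> \<Union>P" if "P \<in> mss_points S" for P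
    using that mss_point_sup_iff[of S "\<Union>P" "\<Inter>P" a b] unfolding mss_points_def by simp
  then show ?thesis
    unfolding mss_embed_def by blast
qed

lemma mss_iff_embed_subset_basic_closed:
  assumes "mss S" and "bs \<noteq> []"
  shows "S a bs \<longleftrightarrow> mss_embed S a \<subseteq> (\<Union>b\<in>set bs. mss_basic_closed S b)"
proof
  assume "S a bs"
  show "mss_embed S a \<subseteq> (\<Union>b\<in>set bs. mss_basic_closed S b)"
  proof
    fix P assume "P \<in> mss_embed S a"
    then have P: "mss_point S (\<Union>P) (\<Inter>P)" "P \<in> mss_points S" "a \<notin> \<Union>P"
      unfolding mss_embed_def mss_points_def by auto
    then obtain b where "b \<in> set bs" "b \<notin> \<Inter>P"
      using mss_point_not_all_in[OF P(1) \<open>S a bs\<close> assms(2)] by blast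
    with P(2) show "P \<in> (\<Union>b\<in>set bs. mss_basic_closed S b)"
      unfolding mss_basic_closed_def by blast
  qed
next
  assume subset: "mss_embed S a \<subseteq> (\<Union>b\<in>set bs. mss_basic_closed S b)"
  define J where "J = {c. S c bs}"
  define N where "N = {c. \<exists>b\<in>set bs. S c [b]}"
  have point: "mss_point S J N"
    unfolding J_def N_def using mss_point_of_list[OF assms] .
  then have "N \<subseteq> J"
    by (rule mss_point_subset)
  then have pair: "\<Union>{J, N} = J" "\<Inter>{J, N} = N" by auto
  show "S a bs"
  proof (rule ccontr)
    assume "\<not> S a bs"
    then have "a \<notin> \<Union>{J, N}"
      using \<open>N \<subseteq> J\<close> by (auto simp: J_def)
    then have "{J, N} \<in> mss_embed S a"
      using pair_in_mss_points[OF point] unfolding mss_embed_def by blast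
    then obtain b where "b \<in> set bs" "{J, N} \<in> mss_basic_closed S b"
      using subset by blast
    then have "b \<notin> \<Inter>{J, N}"
      unfolding mss_basic_closed_def by blast
    with pair(2) have "b \<notin> N"
      by simp
    with \<open>b \<in> set bs\<close> show False
      using mss_refl[OF assms(1)] unfolding N_def by blast
  qed
qed

lemma mss_basic_closed_mono: "S b [c] \<Longrightarrow> mss_basic_closed S b \<subseteq> mss_basic_closed S c"
  unfolding mss_basic_closed_def mss_points_def mss_point_def by blast

lemma mss_closure_embed:
  assumes "mss S"
  shows "generated_closure (mss_points S) (range (mss_basic_closed S)) (mss_embed S b)
    = mss_basic_closed S b"
proof (rule generated_closure_eqI)
  have single: "S a [c] \<longleftrightarrow> mss_embed S a \<subseteq> mss_basic_closed S c" for a c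
    using mss_iff_embed_subset_basic_closed[OF assms, of "[c]" a] by simp
  show "mss_embed S b \<subseteq> mss_basic_closed S b"
    using single mss_refl[OF assms] by blast
  fix D assume "D \<in> range (mss_basic_closed S)" and "mss_embed S b \<subseteq> D"
  then obtain c where "D = mss_basic_closed S c" and "S b [c]"
    using single by blast
  then show "mss_basic_closed S b \<subseteq> D"
    using mss_basic_closed_mono by blast
qed (auto simp: mss_basic_closed_def)

theorem corollary5p2:
  fixes S :: "'a::semilattice_sup \<Rightarrow> 'a list \<Rightarrow> bool"
  assumes "mss S"
  shows "\<exists>(X :: 'a set set set) K \<phi>.
           closure_op_on X K \<and> inj \<phi> \<and> (\<forall>a. \<phi> a \<subseteq> X) \<and>
           (\<forall>a b. \<phi> (sup a b) = \<phi> a \<union> \<phi> b) \<and>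
           (\<forall>a bs. bs \<noteq> [] \<longrightarrow> (S a bs \<longleftrightarrow> \<phi> a \<subseteq> (\<Union>b\<in>set bs. K (\<phi> b))))"
proof (intro exI conjI allI impI)
  let ?K = "generated_closure (mss_points S) (range (mss_basic_closed S))"
  show "closure_op_on (mss_points S) ?K"
    by (rule closure_op_on_generated_closure)
  show "inj (mss_embed S)"
    by (rule inj_mss_embed)
  show "mss_embed S a \<subseteq> mss_points S" for a
    unfolding mss_embed_def by blast
  show "mss_embed S (sup a b) = mss_embed S a \<union> mss_embed S b" for a b
    by (rule mss_embed_sup)
  show "S a bs \<longleftrightarrow> mss_embed S a \<subseteq> (\<Union>b\<in>set bs. ?K (mss_embed S b))" if "bs \<noteq> []" for a bs
    using mss_iff_embed_subset_basic_closed[OF assms that] by (simp add: mss_closure_embed[OF assms])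
qed

end
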